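(* For all $i \in \mathbb{N}$ and all $t \geq 0$, at most $((1+\alpha)^i - 1)N(t)$ nodes enter during $(t, t+Di]$ and $(1-\alpha)^i N(t) \leq N(t+Di) \leq (1+\alpha)^i N(t)$.
   Context: Consider an asynchronous message-passing system whose composition changes over time. An adversary generates, for each node $p$, at most one Enter($p$) signal and at most one Leave($p$) signal (a Leave($p$) signal for a crashed node $p$ may be generated at another active node; such forced leaves also count as leaves). A node is present at time $t$ if it has entered but not left by time $t$; $N(t)$ denotes the number of nodes present at time $t$. $D$ is an upper bound (unknown to the nodes) on message delay. Churn assumption: there is a constant $\alpha < 1$ (the churn rate) such that for every time $t$, the total number of nodes that enter or leave during $[t, t+D]$ is at most $\alpha N(t)$. *)

theory Defs
  imports Complex_Main
begin

text \<open>A churn schedule is given by two partial functions on nodes: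
  enter p = Some e  : the (unique) Enter(p) signal occurs at time e;
  leave p = Some l  : the (unique) Leave(p) signal (possibly forced) occurs at time l.
  None means the corresponding signal is never generated.\<close>

definition present :: "('a \<Rightarrow> real option) \<Rightarrow> ('a \<Rightarrow> real option) \<Rightarrow> real \<Rightarrow> 'a set" where
  "present enter leave t =
     {p. (\<exists>e. enter p = Some e \<and> e \<le> t) \<and> \<not> (\<exists>l. leave p = Some l \<and> l \<le> t)}"

definition Nnodes :: "('a \<Rightarrow> real option) \<Rightarrow> ('a \<Rightarrow> real option) \<Rightarrow> real \<Rightarrow> nat" where
  "Nnodes enter leave t = card (present enter leave t)"

definition enters_in :: "('a \<Rightarrow> real option) \<Rightarrow> real set \<Rightarrow> 'a set" where
  "enters_in enter S = {p. \<exists>e. enter p = Some e \<and> e \<in> S}"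

definition leaves_in :: "('a \<Rightarrow> real option) \<Rightarrow> real set \<Rightarrow> 'a set" where
  "leaves_in leave S = {p. \<exists>l. leave p = Some l \<and> l \<in> S}"

definition churn_ok :: "('a \<Rightarrow> real option) \<Rightarrow> ('a \<Rightarrow> real option) \<Rightarrow> real \<Rightarrow> real \<Rightarrow> bool" where
  "churn_ok enter leave \<alpha> D \<longleftrightarrow>
     (\<forall>t\<ge>0. finite (enters_in enter {t..t+D}) \<and> finite (leaves_in leave {t..t+D}) \<and>
        real (card (enters_in enter {t..t+D}) + card (leaves_in leave {t..t+D}))
          \<le> \<alpha> * real (Nnodes enter leave t))"

end

theory Submission
  imports Defs
begin

(* Between times s and s' the population changes only through the nodes that enter or
   leave in (s, s'].  Over one window [s, s + D] at most alpha N(s) nodes do so, whence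
   (1 - alpha) N(s) <= N(s + D) <= (1 + alpha) N(s), and at most alpha N(s) of them enter.
   Iterating over the i consecutive windows starting at t gives the geometric bounds; the
   entries telescope to ((1 + alpha)^i - 1) N(t).  A negative rate forces N = 0 from time 0 on,
   and the entry bound then follows from the one for rate 0. *)

lemma enters_in_mono: "S \<subseteq> T \<Longrightarrow> enters_in enter S \<subseteq> enters_in enter T"
  unfolding enters_in_def by blast

lemma leaves_in_mono: "S \<subseteq> T \<Longrightarrow> leaves_in leave S \<subseteq> leaves_in leave T"
  unfolding leaves_in_def by blast

lemma enters_in_Un: "enters_in enter (S \<union> T) = enters_in enter S \<union> enters_in enter T"
  unfolding enters_in_def by blast

lemma present_subset_Un_enters_in:
  "s \<le> s' \<Longrightarrow> present enter leave s' \<subseteq> present enter leave s \<union> enters_in enter {s<..s'}"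
  unfolding present_def enters_in_def by force

lemma present_subset_Un_leaves_in:
  "s \<le> s' \<Longrightarrow> present enter leave s \<subseteq> present enter leave s' \<union> leaves_in leave {s<..s'}"
  unfolding present_def leaves_in_def by force

lemma card_le_card_Un: "finite B \<Longrightarrow> finite C \<Longrightarrow> A \<subseteq> B \<union> C \<Longrightarrow> card A \<le> card B + card C"
  by (meson card_Un_le card_mono finite_UnI le_trans)

lemma churn_ok_mono_rate:
  assumes "churn_ok enter leave \<alpha> D" and "\<alpha> \<le> \<beta>"
  shows "churn_ok enter leave \<beta> D"
  using assms order_trans[OF _ mult_right_mono] unfolding churn_ok_def by fastforce

context
  fixes enter leave :: "'a \<Rightarrow> real option" and \<alpha> D :: real
  assumes churn: "churn_ok enter leave \<alpha> D"
    and D_pos: "0 < D"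
    and finite_present: "\<And>t. finite (present enter leave t)"
begin

lemma window_finite:
  assumes "0 \<le> s"
  shows "finite (enters_in enter {s<..s + D})" and "finite (leaves_in leave {s<..s + D})"
  using churn assms finite_subset[OF enters_in_mono] finite_subset[OF leaves_in_mono]
  unfolding churn_ok_def by (metis greaterThanAtMost_subseteq_atLeastAtMost_iff order_refl)+

lemma window_card_le:
  assumes "0 \<le> s"
  shows "real (card (enters_in enter {s<..s + D})) + real (card (leaves_in leave {s<..s + D}))
    \<le> \<alpha> * real (Nnodes enter leave s)"
proof -
  have sub: "{s<..s + D} \<subseteq> {s..s + D}" by auto
  have "card (enters_in enter {s<..s + D}) \<le> card (enters_in enter {s..s + D})"
    using churn assms card_mono[OF _ enters_in_mono[OF sub]] unfolding churn_ok_def by blast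
  moreover have "card (leaves_in leave {s<..s + D}) \<le> card (leaves_in leave {s..s + D})"
    using churn assms card_mono[OF _ leaves_in_mono[OF sub]] unfolding churn_ok_def by blast
  ultimately show ?thesis
    using churn assms unfolding churn_ok_def by fastforce
qed

lemma Nnodes_window_le:
  assumes "0 \<le> s"
  shows "real (Nnodes enter leave (s + D)) \<le> (1 + \<alpha>) * real (Nnodes enter leave s)"
proof -
  have "Nnodes enter leave (s + D) \<le> Nnodes enter leave s + card (enters_in enter {s<..s + D})"
    unfolding Nnodes_def
    using finite_present window_finite(1)[OF assms] D_pos
    by (intro card_le_card_Un present_subset_Un_enters_in) auto
  then show ?thesis using window_card_le[OF assms] by (simp add: algebra_simps)
qed

lemma Nnodes_window_ge:
  assumes "0 \<le> s"
  shows "(1 - \<alpha>) * real (Nnodes enter leave s) \<le> real (Nnodes enter leave (s + D))"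
proof -
  have "Nnodes enter leave s \<le> Nnodes enter leave (s + D) + card (leaves_in leave {s<..s + D})"
    unfolding Nnodes_def
    using finite_present window_finite(2)[OF assms] D_pos
    by (intro card_le_card_Un present_subset_Un_leaves_in) auto
  then show ?thesis using window_card_le[OF assms] by (simp add: algebra_simps)
qed

lemma Nnodes_eq_0_if_rate_neg:
  assumes "\<alpha> < 0" and "0 \<le> s"
  shows "Nnodes enter leave s = 0"
proof -
  have "0 \<le> \<alpha> * real (Nnodes enter leave s)"
    using window_card_le[OF assms(2)] by linarith
  then show ?thesis using assms(1) by (simp add: zero_le_mult_iff)
qed

lemma Nnodes_after_windows_le:
  assumes "0 \<le> \<alpha>" and "0 \<le> t"
  shows "real (Nnodes enter leave (t + D * real i)) \<le> (1 + \<alpha>) ^ i * real (Nnodes enter leave t)"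
proof (induction i)
  case (Suc i)
  let ?s = "t + D * real i"
  have "real (Nnodes enter leave (?s + D)) \<le> (1 + \<alpha>) * real (Nnodes enter leave ?s)"
    using Nnodes_window_le assms D_pos by simp
  also have "\<dots> \<le> (1 + \<alpha>) ^ Suc i * real (Nnodes enter leave t)"
    using mult_left_mono[OF Suc.IH, of "1 + \<alpha>"] assms by (simp add: mult.assoc)
  finally show ?case by (simp add: algebra_simps)
qed simp

lemma Nnodes_after_windows_ge:
  assumes "\<alpha> \<le> 1" and "0 \<le> t"
  shows "(1 - \<alpha>) ^ i * real (Nnodes enter leave t) \<le> real (Nnodes enter leave (t + D * real i))"
proof (induction i)
  case (Suc i)
  let ?s = "t + D * real i"
  have "(1 - \<alpha>) ^ Suc i * real (Nnodes enter leave t) \<le> (1 - \<alpha>) * real (Nnodes enter leave ?s)"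
    using mult_left_mono[OF Suc.IH, of "1 - \<alpha>"] assms by (simp add: mult.assoc)
  also have "\<dots> \<le> real (Nnodes enter leave (?s + D))"
    using Nnodes_window_ge assms D_pos by simp
  finally show ?case by (simp add: algebra_simps)
qed simp

lemma enters_after_windows:
  assumes "0 \<le> \<alpha>" and "0 \<le> t"
  shows "finite (enters_in enter {t<..t + D * real i})
    \<and> real (card (enters_in enter {t<..t + D * real i}))
        \<le> ((1 + \<alpha>) ^ i - 1) * real (Nnodes enter leave t)"
proof (induction i)
  case 0
  then show ?case by (simp add: enters_in_def)
next
  case (Suc i)
  let ?s = "t + D * real i"
  let ?E = "enters_in enter {t<..?s}" and ?W = "enters_in enter {?s<..?s + D}"
  have s_nonneg: "0 \<le> ?s" using assms D_pos by simp
  have split: "enters_in enter {t<..t + D * real (Suc i)} = ?E \<union> ?W"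
    using ivl_disj_un_two(6)[of t ?s "?s + D"] D_pos s_nonneg
    by (simp add: enters_in_Un[symmetric] algebra_simps)
  have "real (card (?E \<union> ?W)) \<le> real (card ?E) + real (card ?W)"
    using card_Un_le[of ?E ?W] by linarith
  also have "\<dots> \<le> ((1 + \<alpha>) ^ i - 1) * real (Nnodes enter leave t)
      + \<alpha> * ((1 + \<alpha>) ^ i * real (Nnodes enter leave t))"
    using Suc.IH window_card_le[OF s_nonneg]
      mult_left_mono[OF Nnodes_after_windows_le[OF assms, where i = i] assms(1)]
    by (smt (verit) of_nat_0_le_iff)
  also have "\<dots> = ((1 + \<alpha>) ^ Suc i - 1) * real (Nnodes enter leave t)"
    by (simp add: algebra_simps)
  finally show ?case
    using split Suc.IH window_finite(1)[OF s_nonneg] by simp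
qed

end

theorem lemma1:
  fixes enter leave :: "'a \<Rightarrow> real option" and \<alpha> D :: real
  assumes "\<alpha> < 1" and "0 < D"
    and "\<And>t. finite (present enter leave t)"
    and "churn_ok enter leave \<alpha> D"
  shows "\<forall>(i::nat) (t::real). t \<ge> 0 \<longrightarrow>
      real (card (enters_in enter {t<..t + D * real i}))
        \<le> ((1 + \<alpha>) ^ i - 1) * real (Nnodes enter leave t)
    \<and> (1 - \<alpha>) ^ i * real (Nnodes enter leave t) \<le> real (Nnodes enter leave (t + D * real i))
    \<and> real (Nnodes enter leave (t + D * real i)) \<le> (1 + \<alpha>) ^ i * real (Nnodes enter leave t)"
proof (intro allI impI)
  fix i :: nat and t :: real
  assume t: "t \<ge> 0"
  note windows = assms(4,2,3)
  have lower: "(1 - \<alpha>) ^ i * real (Nnodes enter leave t) \<le> real (Nnodes enter leave (t + D * real i))"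
    using Nnodes_after_windows_ge[OF windows] assms(1) t by simp
  show "real (card (enters_in enter {t<..t + D * real i}))
        \<le> ((1 + \<alpha>) ^ i - 1) * real (Nnodes enter leave t)
    \<and> (1 - \<alpha>) ^ i * real (Nnodes enter leave t) \<le> real (Nnodes enter leave (t + D * real i))
    \<and> real (Nnodes enter leave (t + D * real i)) \<le> (1 + \<alpha>) ^ i * real (Nnodes enter leave t)"
  proof (cases "0 \<le> \<alpha>")
    case True
    then show ?thesis
      using enters_after_windows[OF windows] Nnodes_after_windows_le[OF windows] lower t by blast
  next
    case False
    have "churn_ok enter leave 0 D"
      using churn_ok_mono_rate[OF assms(4)] False by simp
    then have "real (card (enters_in enter {t<..t + D * real i})) \<le> 0 * real (Nnodes enter leave t)"
      using enters_after_windows[OF _ assms(2,3), of 0 t i] t by simp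
    then show ?thesis
      using Nnodes_eq_0_if_rate_neg[OF windows] False t assms(2) by simp
  qed
qed

end
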